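(* Let $n=2m>2$ and let $(A;B)\in GS(n)$ be Golay sequences. Then $(A;A;B;B)$ and $(B;B;A;A)$ belong to $NS(n)$, and they are equivalent (with respect to the equivalence relation on $NS(n)$ generated by the elementary transformations (E1)–(E5)) if and only if $B^*\in\{A,-A,A',-A'\}$.
   Context: A binary sequence is a finite sequence $A=a_1,\dots,a_n$ with $a_i\in\{\pm1\}$. Its nonperiodic autocorrelation function is $N_A(i)=\sum_{j\in\mathbb Z}a_ja_{i+j}$, where $a_k=0$ for $k<1$ or $k>n$. For binary sequences: $-A=-a_1,\dots,-a_n$, $A'=a_n,\dots,a_1$, $A^*=a_1,-a_2,a_3,\dots,(-1)^{n-1}a_n$. Golay sequences $GS(n)$: pairs $(A;B)$ of binary sequences of length $n$ with $N_A(i)+N_B(i)=0$ for all $i\ne0$. Normal sequences $NS(n)$: quadruples $(A;A;C;D)$ of binary sequences of length $n$ with $2N_A(i)+N_C(i)+N_D(i)=0$ for all $i\neq0$. Encoding: write $n=2m$ (even case). The $i$-th quad ($1\le i\le m$) of a pair $(X;Y)$ of length-$n$ sequences is $\begin{bmatrix} x_i & x_{n+1-i}\\ y_i & y_{n+1-i}\end{bmatrix}$; quads are labelled (rows as pairs) $1=[(+,+),(+,+)]$, $2=[(+,+),(-,-)]$, $3=[(-,+),(-,+)]$, $4=[(+,-),(-,+)]$, $5=[(-,+),(+,-)]$, $6=[(+,-),(+,-)]$, $7=[(-,-),(+,+)]$, $8=[(-,-),(-,-)]$. Elementary transformations of $(A;A;C;D)\in NS(n)$: (E1) replace both copies of $A$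 by $-A$, or $C$ by $-C$, or $D$ by $-D$; (E2) replace both copies of $A$ by $A'$, or $C$ by $C'$, or $D$ by $D'$; (E3) interchange $C$ and $D$; (E4) replace $(C;D)$ by the pair obtained by replacing, for every $i$ whose $i$-th quad of $(C;D)$ has label $4$, that quad by the quad labelled $5$, and vice versa (all other quads unchanged); this yields an element of $NS(n)$; (E5) replace $(A;A;C;D)$ by $(A^*;A^*;C^*;D^* )$. Two members of $NS(n)$ are equivalent if one is obtained from the other by a finite sequence of elementary transformations. *)

theory Defs
  imports Main
begin

text \<open>Binary sequences are lists of integers with entries in {1,-1}.
  The paper's index j (1-based) corresponds to list position j-1.\<close>

definition binary :: "int list \<Rightarrow> bool" where
  "binary A \<longleftrightarrow> set A \<subseteq> {1, -1}"

definition sval :: "int list \<Rightarrow> int \<Rightarrow> int" where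
  "sval A k = (if 1 \<le> k \<and> k \<le> int (length A) then A ! (nat k - 1) else 0)"

definition autocorr :: "int list \<Rightarrow> int \<Rightarrow> int" where
  "autocorr A i = (\<Sum>j\<in>{1..int (length A)}. sval A j * sval A (i + j))"

definition neg_seq :: "int list \<Rightarrow> int list" where
  "neg_seq A = map uminus A"

definition rev_seq :: "int list \<Rightarrow> int list" where
  "rev_seq A = rev A"

text \<open>A^* = a_1, -a_2, a_3, ..., (-1)^(n-1) a_n\<close>
definition alt_seq :: "int list \<Rightarrow> int list" where
  "alt_seq A = map (\<lambda>k. (-1) ^ k * A ! k) [0..<length A]"

definition GS :: "nat \<Rightarrow> (int list \<times> int list) set" where
  "GS n = {(A, B). length A = n \<and> length B = n \<and> binary A \<and> binary B \<and>
      (\<forall>i::int. i \<noteq> 0 \<longrightarrow> autocorr A i + autocorr B i = 0)}"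

definition NS :: "nat \<Rightarrow> (int list \<times> int list \<times> int list \<times> int list) set" where
  "NS n = {(A1, A2, C, D). A1 = A2 \<and> length A1 = n \<and> length C = n \<and> length D = n \<and>
      binary A1 \<and> binary C \<and> binary D \<and>
      (\<forall>i::int. i \<noteq> 0 \<longrightarrow> 2 * autocorr A1 i + autocorr C i + autocorr D i = 0)}"

text \<open>The i-th quad (1 \<le> i \<le> m, n = 2m) of a pair (X;Y):
  [[x_i, x_{n+1-i}], [y_i, y_{n+1-i}]], written as a pair of rows.\<close>
definition quad :: "int list \<Rightarrow> int list \<Rightarrow> nat \<Rightarrow> (int \<times> int) \<times> (int \<times> int)" where
  "quad X Y i = ((X ! (i - 1), X ! (length X - i)), (Y ! (i - 1), Y ! (length X - i)))"

definition quad4 :: "(int \<times> int) \<times> (int \<times> int)" where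
  "quad4 = ((1, -1), (-1, 1))"

definition quad5 :: "(int \<times> int) \<times> (int \<times> int)" where
  "quad5 = ((-1, 1), (1, -1))"

text \<open>Index (1-based) of the quad containing list position k (0-based), for even n.\<close>
definition quad_index :: "nat \<Rightarrow> nat \<Rightarrow> nat" where
  "quad_index n k = (if k < n div 2 then k + 1 else n - k)"

text \<open>(E4): every quad labelled 4 is replaced by the quad labelled 5 and vice versa;
  since quad5 is the entrywise negation of quad4, this negates the four entries of such quads.\<close>
definition swap_quad :: "(int \<times> int) \<times> (int \<times> int) \<Rightarrow> (int \<times> int) \<times> (int \<times> int)" where
  "swap_quad q = (if q = quad4 then quad5 else if q = quad5 then quad4 else q)"

definition e4 :: "int list \<Rightarrow> int list \<Rightarrow> int list \<times> int list" where
  "e4 X Y = (let n = length X;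
       new = (\<lambda>k. swap_quad (quad X Y (quad_index n k)));
       pick = (\<lambda>k q. if k < n div 2 then q else (snd q, fst q))
     in (map (\<lambda>k. fst (fst (map_prod (pick k) (pick k) (new k)))) [0..<n],
         map (\<lambda>k. fst (snd (map_prod (pick k) (pick k) (new k)))) [0..<n]))"

type_synonym quadruple = "int list \<times> int list \<times> int list \<times> int list"

inductive elem_trans :: "quadruple \<Rightarrow> quadruple \<Rightarrow> bool" where
  E1a: "elem_trans (A, A, C, D) (neg_seq A, neg_seq A, C, D)"
| E1c: "elem_trans (A, A, C, D) (A, A, neg_seq C, D)"
| E1d: "elem_trans (A, A, C, D) (A, A, C, neg_seq D)"
| E2a: "elem_trans (A, A, C, D) (rev_seq A, rev_seq A, C, D)"
| E2c: "elem_trans (A, A, C, D) (A, A, rev_seq C, D)"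
| E2d: "elem_trans (A, A, C, D) (A, A, C, rev_seq D)"
| E3: "elem_trans (A, A, C, D) (A, A, D, C)"
| E4: "elem_trans (A, A, C, D) (A, A, fst (e4 C D), snd (e4 C D))"
| E5: "elem_trans (A, A, C, D) (alt_seq A, alt_seq A, alt_seq C, alt_seq D)"

definition ns_equiv :: "nat \<Rightarrow> quadruple \<Rightarrow> quadruple \<Rightarrow> bool" where
  "ns_equiv n X Y \<longleftrightarrow> X \<in> NS n \<and> Y \<in> NS n \<and>
     (elem_trans\<^sup>*\<^sup>* X Y \<or> elem_trans\<^sup>*\<^sup>* Y X)"

end

theory Submission
  imports Defs
begin

text \<open>
  The operations negation, reversal and alternation generate a group acting on
  binary sequences; on sequences of even length the "dihedral class"
  D(X) = {X, -X, X', -X'} together with D(X^*) is an orbit of this group.  The first component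
  of a quadruple in NS(n) is only ever changed by (E1), (E2) and (E5), so along any chain of
  elementary transformations it stays in the orbit D(A) \<union> D(A^*) of the initial one.

  For a Golay pair (A;B) the partner B can never lie in D(A): the autocorrelation at shift
  n-1 is a_1 a_n, which is invariant under negation and reversal and is nonzero for binary
  sequences, whereas the Golay condition forces N_A(n-1) + N_B(n-1) = 0.  Hence
  (A;A;B;B) ~ (B;B;A;A) forces B \<in> D(A^*), i.e. B^* \<in> D(A).  Conversely, if B^* \<in> D(A), one
  application of (E5) followed by suitable (E1)/(E2) steps on each component leads from
  (A;A;B;B) to (B;B;A;A).
\<close>

lemma length_neg_seq [simp]: "length (neg_seq X) = length X"
  by (simp add: neg_seq_def)

lemma length_rev_seq [simp]: "length (rev_seq X) = length X"
  by (simp add: rev_seq_def)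

lemma length_alt_seq [simp]: "length (alt_seq X) = length X"
  by (simp add: alt_seq_def)

lemma neg_seq_neg_seq [simp]: "neg_seq (neg_seq X) = X"
  by (simp add: neg_seq_def comp_def)

lemma rev_seq_rev_seq [simp]: "rev_seq (rev_seq X) = X"
  by (simp add: rev_seq_def)

lemma rev_seq_neg_seq [simp]: "rev_seq (neg_seq X) = neg_seq (rev_seq X)"
  by (simp add: rev_seq_def neg_seq_def rev_map)

lemma alt_seq_neg_seq [simp]: "alt_seq (neg_seq X) = neg_seq (alt_seq X)"
  by (rule nth_equalityI) (auto simp: alt_seq_def neg_seq_def)

lemma alt_seq_alt_seq [simp]: "alt_seq (alt_seq X) = X"
proof (rule nth_equalityI)
  fix k assume "k < length (alt_seq (alt_seq X))"
  then show "alt_seq (alt_seq X) ! k = X ! k"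
    by (simp add: alt_seq_def mult.assoc[symmetric] power_mult_distrib[symmetric])
qed simp

text \<open>For even length, alternation and reversal anticommute: (X')^* = -((X^*)').
  This is why the dihedral classes are permuted by alternation.\<close>
lemma alt_seq_rev_seq [simp]:
  assumes "even (length X)"
  shows "alt_seq (rev_seq X) = neg_seq (rev_seq (alt_seq X))"
proof (rule nth_equalityI)
  fix k assume "k < length (alt_seq (rev_seq X))"
  then have k: "k < length X" by simp
  have "even (length X - Suc k) \<longleftrightarrow> odd k"
    using assms k by auto
  then have sign: "(-1::int) ^ (length X - Suc k) = - ((-1) ^ k)"
    by (cases "even k") auto
  have "length X - Suc k < length X" using k by simp
  then show "alt_seq (rev_seq X) ! k = neg_seq (rev_seq (alt_seq X)) ! k"
    using k by (simp add: alt_seq_def rev_seq_def neg_seq_def rev_nth sign)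
qed simp

text \<open>The dihedral class {X, -X, X', -X'}: the sequences obtainable by (E1) and (E2).\<close>
definition dihedral :: "int list \<Rightarrow> int list set" where
  "dihedral X = {X, neg_seq X, rev_seq X, neg_seq (rev_seq X)}"

text \<open>The orbit of X under negation, reversal and alternation (for even length).\<close>
definition sym_orbit :: "int list \<Rightarrow> int list set" where
  "sym_orbit X = dihedral X \<union> dihedral (alt_seq X)"

lemma dihedral_self [simp]: "X \<in> dihedral X"
  by (simp add: dihedral_def)

lemma dihedral_sym: "Y \<in> dihedral X \<Longrightarrow> X \<in> dihedral Y"
  by (auto simp: dihedral_def)

lemma dihedral_alt_seq:
  assumes "even (length X)" and "Y \<in> dihedral X"
  shows "alt_seq Y \<in> dihedral (alt_seq X)"
  using assms by (auto simp: dihedral_def)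

lemma dihedral_alt_seq_swap:
  assumes "even (length Y)" and "alt_seq X \<in> dihedral Y"
  shows "alt_seq Y \<in> dihedral X"
  using dihedral_alt_seq[OF assms] dihedral_sym by simp

lemma sym_orbit_closed:
  assumes "even (length X)" and "Y \<in> sym_orbit X"
  shows "neg_seq Y \<in> sym_orbit X" "rev_seq Y \<in> sym_orbit X" "alt_seq Y \<in> sym_orbit X"
  using assms by (auto simp: sym_orbit_def dihedral_def)

text \<open>Along any chain of elementary transformations the first component stays in the orbit
  of the initial first component; (E3) and (E4) do not touch it at all.\<close>
lemma elem_trans_first_in_orbit:
  assumes "elem_trans\<^sup>*\<^sup>* P Q" and "even (length (fst P))"
  shows "fst Q \<in> sym_orbit (fst P)"
  using assms(1)
proof (induction rule: rtranclp_induct)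
  case base
  then show ?case by (simp add: sym_orbit_def)
next
  case (step Q R)
  from step.hyps(2) show ?case
    by cases (use step.IH sym_orbit_closed[OF assms(2)] in auto)
qed

lemma elem_trans_first_dihedral:
  assumes "A' \<in> dihedral A"
  shows "elem_trans\<^sup>*\<^sup>* (A, A, C, D) (A', A', C, D)"
proof -
  have "elem_trans\<^sup>*\<^sup>* (A, A, C, D) (neg_seq (rev_seq A), neg_seq (rev_seq A), C, D)"
    using elem_trans.E2a[of A C D] elem_trans.E1a[of "rev_seq A" C D] by auto
  then show ?thesis
    using assms elem_trans.E1a elem_trans.E2a by (auto simp: dihedral_def)
qed

lemma elem_trans_third_dihedral:
  assumes "C' \<in> dihedral C"
  shows "elem_trans\<^sup>*\<^sup>* (A, A, C, D) (A, A, C', D)"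
proof -
  have "elem_trans\<^sup>*\<^sup>* (A, A, C, D) (A, A, neg_seq (rev_seq C), D)"
    using elem_trans.E2c[of A C D] elem_trans.E1c[of A "rev_seq C" D] by auto
  then show ?thesis
    using assms elem_trans.E1c elem_trans.E2c by (auto simp: dihedral_def)
qed

lemma elem_trans_fourth_dihedral:
  assumes "D' \<in> dihedral D"
  shows "elem_trans\<^sup>*\<^sup>* (A, A, C, D) (A, A, C, D')"
proof -
  have "elem_trans\<^sup>*\<^sup>* (A, A, C, D) (A, A, C, neg_seq (rev_seq D))"
    using elem_trans.E2d[of A C D] elem_trans.E1d[of A C "rev_seq D"] by auto
  then show ?thesis
    using assms elem_trans.E1d elem_trans.E2d by (auto simp: dihedral_def)
qed

lemma elem_trans_swap_pair:
  assumes "even (length A)" and "alt_seq B \<in> dihedral A"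
  shows "elem_trans\<^sup>*\<^sup>* (A, A, B, B) (B, B, A, A)"
proof -
  have alt_A: "B \<in> dihedral (alt_seq A)"
    using dihedral_alt_seq_swap[OF assms] dihedral_sym by blast
  have alt_B: "A \<in> dihedral (alt_seq B)"
    using dihedral_sym[OF assms(2)] .
  have "elem_trans\<^sup>*\<^sup>* (A, A, B, B) (alt_seq A, alt_seq A, alt_seq B, alt_seq B)"
    using elem_trans.E5 by auto
  also have "elem_trans\<^sup>*\<^sup>* \<dots> (B, B, alt_seq B, alt_seq B)"
    using elem_trans_first_dihedral[OF alt_A] .
  also have "elem_trans\<^sup>*\<^sup>* \<dots> (B, B, A, alt_seq B)"
    using elem_trans_third_dihedral[OF alt_B] .
  also have "elem_trans\<^sup>*\<^sup>* \<dots> (B, B, A, A)"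
    using elem_trans_fourth_dihedral[OF alt_B] .
  finally show ?thesis .
qed

lemma GS_sym: "(A, B) \<in> GS n \<Longrightarrow> (B, A) \<in> GS n"
  by (auto simp: GS_def add.commute)

lemma GS_imp_NS: "(A, B) \<in> GS n \<Longrightarrow> (A, A, B, B) \<in> NS n"
  by (auto simp: GS_def NS_def)

lemma autocorr_last_shift:
  assumes "length X = n" and "n \<ge> 1"
  shows "autocorr X (int n - 1) = X ! 0 * X ! (n - 1)"
proof -
  have split: "{1..int n} = insert 1 {2..int n}" using assms by auto
  have "(\<Sum>j\<in>{2..int n}. sval X j * sval X (int n - 1 + j)) = 0"
    by (rule sum.neutral) (use assms in \<open>auto simp: sval_def\<close>)
  then show ?thesis
    using assms by (simp add: autocorr_def split sval_def nat_diff_distrib)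
qed

lemma end_product_dihedral:
  assumes "Y \<in> dihedral X" and "length X = n" and "n \<ge> 1"
  shows "Y ! 0 * Y ! (n - 1) = X ! 0 * X ! (n - 1)"
proof -
  have pos: "0 < length X" "n - 1 < length X" using assms(2,3) by auto
  moreover have "rev X ! 0 = X ! (n - 1)" "rev X ! (n - 1) = X ! 0"
    using pos assms(2) by (auto simp: rev_nth)
  ultimately show ?thesis
    using assms(1) by (auto simp: dihedral_def neg_seq_def rev_seq_def)
qed

lemma end_product_nonzero:
  assumes "binary X" and "length X = n" and "n \<ge> 1"
  shows "X ! 0 * X ! (n - 1) \<noteq> 0"
proof -
  have "0 < length X" "n - 1 < length X" using assms(2,3) by auto
  then have "X ! 0 \<in> {1, -1}" "X ! (n - 1) \<in> {1, -1}"
    using assms(1) nth_mem unfolding binary_def by blast+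
  then show ?thesis by auto
qed

lemma golay_not_dihedral:
  assumes "(A, B) \<in> GS n" and "n \<ge> 2"
  shows "B \<notin> dihedral A"
proof
  assume B: "B \<in> dihedral A"
  from assms(1) have lengths: "length A = n" "length B = n" and "binary A"
    and golay: "autocorr A (int n - 1) + autocorr B (int n - 1) = 0"
    using assms(2) by (auto simp: GS_def)
  have end_A: "autocorr A (int n - 1) = A ! 0 * A ! (n - 1)"
    using autocorr_last_shift[OF lengths(1)] assms(2) by simp
  have end_B: "autocorr B (int n - 1) = A ! 0 * A ! (n - 1)"
    using autocorr_last_shift[OF lengths(2)] end_product_dihedral[OF B lengths(1)] assms(2)
    by simp
  have "A ! 0 * A ! (n - 1) \<noteq> 0"
    using end_product_nonzero[OF \<open>binary A\<close> lengths(1)] assms(2) by simp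
  then show False
    using golay end_A end_B by simp
qed

lemma golay_reach_partner:
  assumes "(A, B) \<in> GS n" and "n \<ge> 2" and "even n"
    and "elem_trans\<^sup>*\<^sup>* (A, A, B, B) (B, B, A, A)"
  shows "alt_seq B \<in> dihedral A"
proof -
  have even: "even (length A)" using assms(1,3) by (simp add: GS_def)
  have "B \<in> sym_orbit A"
    using elem_trans_first_in_orbit[OF assms(4)] even by simp
  then have "B \<in> dihedral (alt_seq A)"
    using golay_not_dihedral[OF assms(1,2)] by (simp add: sym_orbit_def)
  then show ?thesis
    using dihedral_alt_seq[of "alt_seq A" B] even by simp
qed

theorem mainTheorem3:
  fixes n m :: nat and A B :: "int list"
  assumes "n = 2 * m" and "n > 2" and "(A, B) \<in> GS n"
  shows "(A, A, B, B) \<in> NS n \<and> (B, B, A, A) \<in> NS n \<and>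
    (ns_equiv n (A, A, B, B) (B, B, A, A) \<longleftrightarrow>
      alt_seq B \<in> {A, neg_seq A, rev_seq A, neg_seq (rev_seq A)})"
proof -
  have GS_BA: "(B, A) \<in> GS n" using GS_sym[OF assms(3)] .
  have n2: "n \<ge> 2" and even: "even n" using assms(1,2) by auto
  have even_lengths: "even (length A)" "even (length B)"
    using assms(3) even by (simp_all add: GS_def)
  have NS: "(A, A, B, B) \<in> NS n" "(B, B, A, A) \<in> NS n"
    using GS_imp_NS assms(3) GS_BA by blast+
  have "ns_equiv n (A, A, B, B) (B, B, A, A) \<longleftrightarrow> alt_seq B \<in> dihedral A"
  proof
    assume "ns_equiv n (A, A, B, B) (B, B, A, A)"
    then consider "elem_trans\<^sup>*\<^sup>* (A, A, B, B) (B, B, A, A)"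
      | "elem_trans\<^sup>*\<^sup>* (B, B, A, A) (A, A, B, B)"
      unfolding ns_equiv_def by blast
    then show "alt_seq B \<in> dihedral A"
      by cases (use golay_reach_partner[OF assms(3) n2 even]
          golay_reach_partner[OF GS_BA n2 even]
          dihedral_alt_seq_swap[OF even_lengths(2)] in auto)
  next
    assume "alt_seq B \<in> dihedral A"
    then show "ns_equiv n (A, A, B, B) (B, B, A, A)"
      using elem_trans_swap_pair[OF even_lengths(1)] NS by (simp add: ns_equiv_def)
  qed
  with NS show ?thesis by (simp add: dihedral_def)
qed

end
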